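(* For each $k\in\mathbb{Z}$, the set of standard monomials $\{z_k[a_1,a_2]\}_{a_1,a_2\in\mathbb{Z}}$, where $z_k[a_1,a_2]=x_{k-1}^{[a_2]_+}x_k^{[-a_1]_+}x_{k+1}^{[-a_2]_+}x_{k+2}^{[a_1]_+}$, is a $\underline\Bbbk$-basis of $\mathcal{A}(P_1,P_2)$.
   Context: $[a]_+=\max(a,0)$. $\Bbbk$ is a field of characteristic zero and $P_1,P_2\in\Bbbk[z]$ are monic palindromic polynomials (palindromic: $P(z)=z^dP(z^{-1})$ for $d=\deg P$). With $x_1,x_2$ commuting indeterminates, define $x_k\in\Bbbk(x_1,x_2)$ for all $k\in\mathbb{Z}$ by $x_{k+1}x_{k-1}=P_1(x_k)$ if $k$ is even and $x_{k+1}x_{k-1}=P_2(x_k)$ if $k$ is odd. $\underline\Bbbk$ is the $\mathbb{Z}$-subalgebra of $\Bbbk$ generated by the coefficients of $P_1,P_2$, and $\mathcal{A}(P_1,P_2)$ is the $\underline\Bbbk$-subalgebra of $\Bbbk(x_1,x_2)$ generated by all $x_k$. *)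

theory Defs
  imports "HOL-Computational_Algebra.Polynomial" "HOL-Computational_Algebra.Fraction_Field"
begin

(* The rational function field k(x1,x2) is the fraction field of k[x1][x2]. *)
type_synonym 'k ratfun2 = "'k poly poly fract"

definition emb :: "'k::field_char_0 \<Rightarrow> 'k ratfun2" where
  "emb c = Fract [:[:c:]:] 1"

definition var1 :: "'k::field_char_0 ratfun2" where
  "var1 = Fract [:[:0, 1:]:] 1"

definition var2 :: "'k::field_char_0 ratfun2" where
  "var2 = Fract [:0, 1:] 1"

definition evalP :: "'k::field_char_0 poly \<Rightarrow> 'k ratfun2 \<Rightarrow> 'k ratfun2" where
  "evalP P y = poly (map_poly emb P) y"

definition palindromic :: "'k::field poly \<Rightarrow> bool" where
  "palindromic P \<longleftrightarrow> reflect_poly P = P"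

(* the exchange polynomial used in x_{k+1} x_{k-1} = P(x_k) *)
definition exch :: "'k::field_char_0 poly \<Rightarrow> 'k poly \<Rightarrow> int \<Rightarrow> 'k poly" where
  "exch P1 P2 k = (if even k then P1 else P2)"

(* forward: clpos n = (x_{n+1}, x_{n+2}) *)
fun clpos :: "'k::field_char_0 poly \<Rightarrow> 'k poly \<Rightarrow> nat \<Rightarrow> 'k ratfun2 \<times> 'k ratfun2" where
  "clpos P1 P2 0 = (var1, var2)"
| "clpos P1 P2 (Suc n) = (case clpos P1 P2 n of (a, b) \<Rightarrow>
      (b, evalP (exch P1 P2 (int n + 2)) b / a))"

(* backward: clneg n = (x_{2-n}, x_{1-n}) *)
fun clneg :: "'k::field_char_0 poly \<Rightarrow> 'k poly \<Rightarrow> nat \<Rightarrow> 'k ratfun2 \<times> 'k ratfun2" where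
  "clneg P1 P2 0 = (var2, var1)"
| "clneg P1 P2 (Suc n) = (case clneg P1 P2 n of (a, b) \<Rightarrow>
      (b, evalP (exch P1 P2 (1 - int n)) b / a))"

definition clx :: "'k::field_char_0 poly \<Rightarrow> 'k poly \<Rightarrow> int \<Rightarrow> 'k ratfun2" where
  "clx P1 P2 k = (if k \<ge> 1 then fst (clpos P1 P2 (nat (k - 1)))
                  else snd (clneg P1 P2 (nat (1 - k))))"

inductive_set ring_gen :: "'a::comm_ring_1 set \<Rightarrow> 'a set" for S where
  gen: "s \<in> S \<Longrightarrow> s \<in> ring_gen S"
| zero: "0 \<in> ring_gen S"
| one: "1 \<in> ring_gen S"
| add: "a \<in> ring_gen S \<Longrightarrow> b \<in> ring_gen S \<Longrightarrow> a + b \<in> ring_gen S"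
| neg: "a \<in> ring_gen S \<Longrightarrow> - a \<in> ring_gen S"
| mult: "a \<in> ring_gen S \<Longrightarrow> b \<in> ring_gen S \<Longrightarrow> a * b \<in> ring_gen S"

definition coeff_ring :: "'k::field_char_0 poly \<Rightarrow> 'k poly \<Rightarrow> 'k ratfun2 set" where
  "coeff_ring P1 P2 = ring_gen (emb ` (set (coeffs P1) \<union> set (coeffs P2)))"

definition clalg :: "'k::field_char_0 poly \<Rightarrow> 'k poly \<Rightarrow> 'k ratfun2 set" where
  "clalg P1 P2 = ring_gen (emb ` (set (coeffs P1) \<union> set (coeffs P2)) \<union> range (clx P1 P2))"

definition pos_part :: "int \<Rightarrow> nat" where
  "pos_part a = nat (max a 0)"

definition stdmon :: "'k::field_char_0 poly \<Rightarrow> 'k poly \<Rightarrow> int \<Rightarrow> int \<times> int \<Rightarrow> 'k ratfun2" where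
  "stdmon P1 P2 k a = (case a of (a1, a2) \<Rightarrow>
     clx P1 P2 (k - 1) ^ pos_part a2 * clx P1 P2 k ^ pos_part (- a1)
     * clx P1 P2 (k + 1) ^ pos_part (- a2) * clx P1 P2 (k + 2) ^ pos_part a1)"

definition is_basis_over :: "'a::comm_ring_1 set \<Rightarrow> 'a set \<Rightarrow> ('i \<Rightarrow> 'a) \<Rightarrow> bool" where
  "is_basis_over R M b \<longleftrightarrow>
     (\<forall>F c. finite F \<longrightarrow> (\<forall>i\<in>F. c i \<in> R) \<longrightarrow> (\<Sum>i\<in>F. c i * b i) = 0 \<longrightarrow> (\<forall>i\<in>F. c i = 0))
   \<and> M = {\<Sum>i\<in>F. c i * b i | F c. finite F \<and> (\<forall>i\<in>F. c i \<in> R)}"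

end

theory Submission
  imports Defs
begin

text \<open>Consecutive cluster variables \<open>x\<^sub>m, x\<^sub>m\<^sub>+\<^sub>1\<close> are
  algebraically independent, since each pair is obtained from the previous one by the exchange
  \<open>x\<^sub>m\<^sub>+\<^sub>1 = P(x\<^sub>m)/x\<^sub>m\<^sub>-\<^sub>1\<close>. Palindromicity of the monic
  exchange polynomials makes the fifth term of the sequence a polynomial in the four preceding
  ones, so \<open>x\<^sub>k\<^sub>-\<^sub>1, \<dots>, x\<^sub>k\<^sub>+\<^sub>2\<close> generate \<open>\<A>(P\<^sub>1,P\<^sub>2)\<close>.
  Monomials in these four variables reduce to standard monomials via the two exchange relations
  \<open>x\<^sub>k\<^sub>-\<^sub>1 x\<^sub>k\<^sub>+\<^sub>1 = P(x\<^sub>k)\<close> and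
  \<open>x\<^sub>k x\<^sub>k\<^sub>+\<^sub>2 = P'(x\<^sub>k\<^sub>+\<^sub>1)\<close> with \<open>{P, P'} = {P\<^sub>1, P\<^sub>2}\<close>,
  which gives spanning. Multiplying a
  relation among standard monomials by a large power of \<open>x\<^sub>k x\<^sub>k\<^sub>+\<^sub>1\<close> yields a
  polynomial relation between \<open>x\<^sub>k\<close> and \<open>x\<^sub>k\<^sub>+\<^sub>1\<close> in which, since
  \<open>P(0) = 1\<close>, distinct standard monomials contribute distinct lowest terms; hence all
  coefficients vanish.\<close>

lemma emb_add: "emb (a + b) = emb a + emb b"
  by (simp add: emb_def)

lemma emb_mult: "emb (a * b) = emb a * emb b"
  by (simp add: emb_def)

lemma emb_0 [simp]: "emb 0 = 0"
  by (simp add: emb_def Zero_fract_def)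

lemma emb_1 [simp]: "emb 1 = 1"
  by (simp add: emb_def One_fract_def pCons_one)

lemma emb_neg: "emb (- a) = - emb a"
  by (simp add: emb_def)

lemma emb_eq_0_iff: "emb a = 0 \<longleftrightarrow> a = 0"
  by (simp add: emb_def Zero_fract_def eq_fract)

lemma map_poly_emb_add: "map_poly emb (p + q) = map_poly emb p + map_poly emb q"
  by (intro poly_eqI) (simp add: coeff_map_poly emb_add)

lemma map_poly_emb_smult: "map_poly emb (smult c p) = smult (emb c) (map_poly emb p)"
  by (rule map_poly_smult) (simp_all add: emb_mult)

lemma map_poly_emb_mult: "map_poly emb (p * q) = map_poly emb p * map_poly emb q"
  by (induct p) (simp_all add: map_poly_emb_add map_poly_emb_smult map_poly_pCons)

lemma evalP_add: "evalP (p + q) y = evalP p y + evalP q y"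
  by (simp add: evalP_def map_poly_emb_add)

lemma evalP_mult: "evalP (p * q) y = evalP p y * evalP q y"
  by (simp add: evalP_def map_poly_emb_mult)

lemma evalP_0 [simp]: "evalP 0 y = 0"
  by (simp add: evalP_def)

lemma evalP_1 [simp]: "evalP 1 y = 1"
  by (simp add: evalP_def)

lemma evalP_power: "evalP (p ^ n) y = evalP p y ^ n"
  by (induct n) (simp_all add: evalP_mult)

lemma evalP_const: "evalP [:c:] y = emb c"
  by (simp add: evalP_def map_poly_pCons)

lemma evalP_monom: "evalP (monom c n) y = emb c * y ^ n"
  by (simp add: evalP_def map_poly_monom poly_monom)

lemma evalP_smult: "evalP (smult c p) y = emb c * evalP p y"
  by (simp add: evalP_def map_poly_emb_smult)

lemma evalP_altdef: "evalP P y = (\<Sum>i\<le>degree P. emb (coeff P i) * y ^ i)"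
  unfolding evalP_def poly_altdef
  by (simp add: degree_map_poly emb_eq_0_iff coeff_map_poly)

lemma evalP_split_constant:
  "evalP Q c = emb (coeff Q 0) + c * (\<Sum>i<degree Q. emb (coeff Q (Suc i)) * c ^ i)"
proof -
  have "evalP Q c = (\<Sum>i<Suc (degree Q). emb (coeff Q i) * c ^ i)"
    by (simp add: evalP_altdef lessThan_Suc_atMost)
  also have "\<dots> = emb (coeff Q 0) + (\<Sum>i<degree Q. emb (coeff Q (Suc i)) * c ^ Suc i)"
    by (subst sum.lessThan_Suc_shift) simp
  finally show ?thesis
    by (simp add: sum_distrib_left mult_ac)
qed

section \<open>Algebraic independence of two elements\<close>

text \<open>Bivariate polynomials are elements of \<open>'k poly poly\<close>: \<open>eval2 G a b\<close>
  substitutes \<open>a\<close> for the inner and \<open>b\<close> for the outer variable, and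
  \<open>poly_tensor A B\<close> is the product \<open>A(y) B(z)\<close>.\<close>

definition eval2 :: "'k::field_char_0 poly poly \<Rightarrow> 'k ratfun2 \<Rightarrow> 'k ratfun2 \<Rightarrow> 'k ratfun2" where
  "eval2 G a b = poly (map_poly (\<lambda>p. evalP p a) G) b"

definition alg_indep2 :: "'k::field_char_0 ratfun2 \<Rightarrow> 'k ratfun2 \<Rightarrow> bool" where
  "alg_indep2 a b \<longleftrightarrow> (\<forall>G. eval2 G a b = 0 \<longrightarrow> G = 0)"

definition poly_tensor :: "'a::comm_ring_1 poly \<Rightarrow> 'a poly \<Rightarrow> 'a poly poly" where
  "poly_tensor A B = smult A (map_poly (\<lambda>t. [:t:]) B)"

lemma coeff_poly_tensor: "coeff (poly_tensor A B) j = A * [:coeff B j:]"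
  by (simp add: poly_tensor_def coeff_map_poly)

lemma coeff_coeff_poly_tensor: "coeff (coeff (poly_tensor A B) j) i = coeff A i * coeff B j"
  by (simp add: coeff_poly_tensor)

lemma degree_poly_tensor: "degree (poly_tensor A B) \<le> degree B"
  by (rule degree_le) (simp add: coeff_poly_tensor coeff_eq_0)

lemma eval2_0 [simp]: "eval2 0 a b = 0"
  by (simp add: eval2_def)

lemma eval2_add: "eval2 (G + H) a b = eval2 G a b + eval2 H a b"
proof -
  have "map_poly (\<lambda>p. evalP p a) (G + H) = map_poly (\<lambda>p. evalP p a) G + map_poly (\<lambda>p. evalP p a) H"
    by (intro poly_eqI) (simp add: coeff_map_poly evalP_add)
  then show ?thesis
    by (simp add: eval2_def)
qed

lemma eval2_sum: "eval2 (\<Sum>i\<in>A. f i) a b = (\<Sum>i\<in>A. eval2 (f i) a b)"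
  by (induct A rule: infinite_finite_induct) (simp_all add: eval2_add)

lemma eval2_as_sum:
  assumes "degree G \<le> n"
  shows "eval2 G a b = (\<Sum>j\<le>n. evalP (coeff G j) a * b ^ j)"
proof -
  have "degree (map_poly (\<lambda>p. evalP p a) G) \<le> n"
    using assms by (intro degree_le) (simp add: coeff_map_poly coeff_eq_0)
  then have "eval2 G a b = poly (\<Sum>j\<le>n. monom (coeff (map_poly (\<lambda>p. evalP p a) G) j) j) b"
    unfolding eval2_def by (simp only: poly_as_sum_of_monoms')
  then show ?thesis
    by (simp add: poly_sum poly_monom coeff_map_poly)
qed

lemma eval2_poly_tensor: "eval2 (poly_tensor A B) a b = evalP A a * evalP B b"
proof -
  have "eval2 (poly_tensor A B) a b
      = (\<Sum>j\<le>degree B. evalP A a * (emb (coeff B j) * b ^ j))"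
    by (simp add: eval2_as_sum[OF degree_poly_tensor] coeff_poly_tensor
        evalP_smult evalP_mult evalP_const mult_ac)
  then show ?thesis
    by (simp add: evalP_altdef sum_distrib_left)
qed

lemma sum_poly_tensor_monom_eq_0:
  assumes "finite A" "inj_on g A" and sum0: "(\<Sum>i\<in>A. poly_tensor (monom 1 (g i)) (B i)) = 0"
    and "j \<in> A"
  shows "B j = 0"
proof (rule poly_eqI)
  fix l
  have "0 = coeff (coeff (\<Sum>i\<in>A. poly_tensor (monom 1 (g i)) (B i)) l) (g j)"
    by (simp add: sum0)
  also have "\<dots> = (\<Sum>i\<in>A. if i = j then coeff (B i) l else 0)"
    using assms(2,4)
    by (auto simp: coeff_sum coeff_coeff_poly_tensor coeff_monom dest: inj_onD intro!: sum.cong)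
  also have "\<dots> = coeff (B j) l"
    using assms(1,4) by simp
  finally show "coeff (B j) l = coeff 0 l"
    by simp
qed

lemma sum_poly_tensor_lowest_term:
  fixes c :: "'i \<Rightarrow> 'a::comm_ring_1" and e :: "'i \<Rightarrow> nat \<times> nat"
  assumes "finite F" "inj_on e F"
    and A0: "\<And>a. a \<in> F \<Longrightarrow> coeff (A a) 0 = 1" and B0: "\<And>a. a \<in> F \<Longrightarrow> coeff (B a) 0 = 1"
    and sum0: "(\<Sum>a\<in>F. poly_tensor (smult (c a) (monom 1 (fst (e a)) * A a))
                                    (monom 1 (snd (e a)) * B a)) = 0"
  shows "\<forall>a\<in>F. c a = 0"
proof (rule ccontr)
  assume "\<not> (\<forall>a\<in>F. c a = 0)"
  then obtain a0 where a0: "a0 \<in> F" "c a0 \<noteq> 0"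
    and least: "\<And>a. a \<in> F \<Longrightarrow> c a \<noteq> 0 \<Longrightarrow> fst (e a0) + snd (e a0) \<le> fst (e a) + snd (e a)"
    using ex_has_least_nat[of "\<lambda>a. a \<in> F \<and> c a \<noteq> 0" _ "\<lambda>a. fst (e a) + snd (e a)"] by blast
  define t where "t a = coeff (smult (c a) (monom 1 (fst (e a)) * A a)) (fst (e a0))
    * coeff (monom 1 (snd (e a)) * B a) (snd (e a0))" for a
  have others: "t a = 0" if "a \<in> F" "a \<noteq> a0" for a
  proof (rule ccontr)
    assume "t a \<noteq> 0"
    then have "c a \<noteq> 0" "fst (e a) \<le> fst (e a0)" "snd (e a) \<le> snd (e a0)"
      by (auto simp: t_def coeff_monom_mult split: if_splits)
    with least[OF that(1)] have "e a = e a0"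
      by (simp add: prod_eq_iff)
    then show False
      using inj_onD[OF assms(2)] that a0(1) by blast
  qed
  have "0 = coeff (coeff (\<Sum>a\<in>F. poly_tensor (smult (c a) (monom 1 (fst (e a)) * A a))
                                    (monom 1 (snd (e a)) * B a)) (snd (e a0))) (fst (e a0))"
    by (simp add: sum0)
  also have "\<dots> = (\<Sum>a\<in>F. t a)"
    by (simp add: coeff_sum coeff_coeff_poly_tensor t_def)
  also have "\<dots> = t a0"
    using assms(1) a0(1) others by (simp add: sum.remove)
  also have "\<dots> = c a0"
    by (simp add: t_def coeff_monom_mult A0 B0 a0(1))
  finally show False
    using a0(2) by simp
qed

lemma alg_indep2_nonzero:
  fixes a b :: "'k::field_char_0 ratfun2"
  assumes "alg_indep2 a b"
  shows "a \<noteq> 0" "b \<noteq> 0"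
proof -
  have "eval2 (poly_tensor (monom 1 1) 1) a b = a" "eval2 (poly_tensor 1 (monom 1 1)) a b = b"
    by (simp_all add: eval2_poly_tensor evalP_monom)
  moreover have "coeff (coeff (poly_tensor (monom 1 1) (1 :: 'k poly)) 0) 1 = 1"
    "coeff (coeff (poly_tensor (1 :: 'k poly) (monom 1 1)) 1) 0 = 1"
    by (simp_all add: coeff_coeff_poly_tensor)
  then have "poly_tensor (monom 1 1) (1 :: 'k poly) \<noteq> 0" "poly_tensor (1 :: 'k poly) (monom 1 1) \<noteq> 0"
    by auto
  ultimately show "a \<noteq> 0" "b \<noteq> 0"
    using assms unfolding alg_indep2_def by metis+
qed

lemma alg_indep2_var1_var2: "alg_indep2 var1 (var2 :: 'k::field_char_0 ratfun2)"
proof -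
  have eval_var1: "evalP p var1 = Fract [:p:] 1" for p :: "'k poly"
    by (induct p) (simp_all add: evalP_def map_poly_pCons Zero_fract_def emb_def var1_def)
  have "poly (map_poly (\<lambda>p. Fract [:p:] 1) G) var2 = Fract G 1" for G :: "'k poly poly"
    by (induct G) (simp_all add: map_poly_pCons Zero_fract_def var2_def)
  then show ?thesis
    unfolding alg_indep2_def eval2_def eval_var1 by (simp add: Zero_fract_def eq_fract)
qed

lemma alg_indep2_swap:
  assumes "alg_indep2 a b"
  shows "alg_indep2 b a"
  unfolding alg_indep2_def
proof (intro allI impI)
  fix G assume G: "eval2 G b a = 0"
  define H where "H = (\<Sum>j\<le>degree G. poly_tensor (monom 1 j) (coeff G j))"
  have "eval2 H a b = (\<Sum>j\<le>degree G. a ^ j * evalP (coeff G j) b)"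
    by (simp add: H_def eval2_sum eval2_poly_tensor evalP_monom)
  also have "\<dots> = eval2 G b a"
    by (simp add: eval2_as_sum[of G "degree G"] mult.commute)
  finally have "eval2 H a b = eval2 G b a" .
  then have "H = 0"
    using G assms unfolding alg_indep2_def by metis
  then have "coeff G j = 0" for j
    by (cases "j \<le> degree G")
      (auto simp: H_def coeff_eq_0 intro: sum_poly_tensor_monom_eq_0[of "{..degree G}" id "coeff G"])
  then show "G = 0"
    by (simp add: poly_eq_iff)
qed

text \<open>Multiplying by \<open>a ^ deg G\<close> turns a relation between \<open>b\<close> and
  \<open>c = P(b)/a\<close> into one between \<open>a\<close> and \<open>b\<close>.\<close>

lemma alg_indep2_exchange:
  assumes "alg_indep2 a b" and c: "c = evalP P b / a" and "P \<noteq> 0"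
  shows "alg_indep2 b c"
  unfolding alg_indep2_def
proof (intro allI impI)
  fix G assume G: "eval2 G b c = 0"
  define N where "N = degree G"
  define H where "H = (\<Sum>j\<le>N. poly_tensor (monom 1 (N - j)) (coeff G j * P ^ j))"
  have ca: "c * a = evalP P b"
    using alg_indep2_nonzero(1)[OF assms(1)] c by simp
  have "eval2 H a b = (\<Sum>j\<le>N. a ^ (N - j) * (evalP (coeff G j) b * (c * a) ^ j))"
    by (simp add: H_def eval2_sum eval2_poly_tensor evalP_monom evalP_mult evalP_power ca)
  also have "\<dots> = (\<Sum>j\<le>N. a ^ N * (evalP (coeff G j) b * c ^ j))"
  proof (rule sum.cong)
    fix j assume "j \<in> {..N}"
    then have "a ^ N = a ^ (N - j) * a ^ j"
      by (simp add: power_add[symmetric])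
    then show "a ^ (N - j) * (evalP (coeff G j) b * (c * a) ^ j) = a ^ N * (evalP (coeff G j) b * c ^ j)"
      by (simp add: power_mult_distrib mult_ac)
  qed simp
  also have "\<dots> = a ^ N * eval2 G b c"
    by (simp add: eval2_as_sum[of G N] N_def sum_distrib_left)
  finally have "H = 0"
    using G assms(1) unfolding alg_indep2_def by simp
  moreover have "inj_on (\<lambda>j. N - j) {..N}"
    by (auto simp: inj_on_def)
  ultimately have "coeff G j * P ^ j = 0" if "j \<le> N" for j
    using that sum_poly_tensor_monom_eq_0[of "{..N}" "\<lambda>j. N - j" "\<lambda>j. coeff G j * P ^ j"]
    by (simp add: H_def)
  then have "coeff G j = 0" for j
    using \<open>P \<noteq> 0\<close> by (cases "j \<le> N") (simp_all add: N_def coeff_eq_0)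
  then show "G = 0"
    by (simp add: poly_eq_iff)
qed

lemma ring_gen_subset: "S \<subseteq> ring_gen T \<Longrightarrow> ring_gen S \<subseteq> ring_gen T"
proof
  fix y assume S: "S \<subseteq> ring_gen T" and y: "y \<in> ring_gen S"
  from y show "y \<in> ring_gen T"
    by (induct rule: ring_gen.induct) (use S in \<open>auto intro: ring_gen.intros\<close>)
qed

lemma ring_gen_mono: "S \<subseteq> T \<Longrightarrow> ring_gen S \<subseteq> ring_gen T"
  by (rule ring_gen_subset) (auto intro: ring_gen.gen)

lemma ring_gen_sum: "(\<And>i. i \<in> A \<Longrightarrow> f i \<in> ring_gen S) \<Longrightarrow> sum f A \<in> ring_gen S"
  by (induct A rule: infinite_finite_induct) (auto intro: ring_gen.intros)

lemma ring_gen_power: "a \<in> ring_gen S \<Longrightarrow> a ^ n \<in> ring_gen S"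
  by (induct n) (auto intro: ring_gen.intros)

lemma ring_gen_diff: "a \<in> ring_gen S \<Longrightarrow> b \<in> ring_gen S \<Longrightarrow> a - b \<in> ring_gen S"
  by (metis diff_conv_add_uminus ring_gen.add ring_gen.neg)

lemma ring_gen_emb_image: "y \<in> ring_gen (emb ` C) \<Longrightarrow> \<exists>t. y = emb t"
  by (induct rule: ring_gen.induct) (metis imageE emb_0 emb_1 emb_add emb_neg emb_mult)+

lemma palindromic_coeff_diff:
  assumes "palindromic P" "i \<le> degree P"
  shows "coeff P (degree P - i) = coeff P i"
  using assms coeff_reflect_poly[of P i] unfolding palindromic_def by simp

lemma palindromic_coeff_0:
  "palindromic P \<Longrightarrow> lead_coeff P = 1 \<Longrightarrow> coeff P 0 = 1"
  by (metis coeff_0_reflect_poly palindromic_def)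

text \<open>The palindromicity of \<open>P\<close> is what makes this identity hold: expanding
  \<open>(bd - 1) H\<close> telescopes to \<open>\<Sum>\<^sub>i p\<^sub>i d\<^bsup>n-i\<^esup> ((bd)\<^sup>i - 1)\<close>, and
  subtracting this from \<open>d\<^sup>n P(b)\<close> leaves \<open>\<Sum>\<^sub>i p\<^sub>i d\<^bsup>n-i\<^esup> = P(d)\<close>.\<close>

lemma palindromic_exchange_identity:
  fixes a b c d S :: "'k::field_char_0 ratfun2"
  assumes pal: "palindromic P" and r1: "a * c = evalP P b" and cS: "c * S = b * d - 1"
  defines "n \<equiv> degree P"
  defines "H \<equiv> \<Sum>i\<le>n. emb (coeff P i) * d ^ (n - i) * (\<Sum>j<i. (b * d) ^ j)"
  shows "c * (d ^ n * a - S * H) = evalP P d"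
proof -
  define p where "p i = emb (coeff P i)" for i
  have "c * (d ^ n * a - S * H) = d ^ n * (a * c) - (c * S) * H"
    by (simp add: algebra_simps)
  also have "\<dots> = (\<Sum>i\<le>n. d ^ n * (p i * b ^ i)) - (\<Sum>i\<le>n. p i * d ^ (n - i) * ((b * d) ^ i - 1))"
  proof -
    have "(b * d - 1) * H = (\<Sum>i\<le>n. p i * d ^ (n - i) * ((b * d - 1) * (\<Sum>j<i. (b * d) ^ j)))"
      unfolding H_def p_def sum_distrib_left by (simp add: mult_ac)
    also have "\<dots> = (\<Sum>i\<le>n. p i * d ^ (n - i) * ((b * d) ^ i - 1))"
      by (simp add: power_diff_1_eq)
    finally show ?thesis
      by (simp add: r1 cS evalP_altdef n_def p_def sum_distrib_left)
  qed
  also have "\<dots> = (\<Sum>i\<le>n. p i * d ^ (n - i))"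
  proof -
    have "d ^ n * (p i * b ^ i) - p i * d ^ (n - i) * ((b * d) ^ i - 1) = p i * d ^ (n - i)"
      if "i \<le> n" for i
    proof -
      have "d ^ n = d ^ (n - i) * d ^ i"
        using that by (simp add: power_add[symmetric])
      then show ?thesis
        by (simp add: power_mult_distrib algebra_simps)
    qed
    then show ?thesis
      by (simp add: sum_subtractf[symmetric])
  qed
  also have "\<dots> = (\<Sum>i\<le>n. p (n - i) * d ^ (n - i))"
    by (rule sum.cong) (simp_all add: p_def n_def palindromic_coeff_diff[OF pal])
  also have "\<dots> = (\<Sum>i\<le>n. p i * d ^ i)"
    using sum.atLeastAtMost_rev[of "\<lambda>i. p i * d ^ i" 0 n] by (simp add: atMost_atLeast0)
  also have "\<dots> = evalP P d"
    by (simp add: evalP_altdef p_def n_def)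
  finally show ?thesis .
qed

lemma exchange_in_ring_gen:
  fixes a b c d e :: "'k::field_char_0 ratfun2"
  assumes pal: "palindromic P" and Q0: "coeff Q 0 = 1" and "c \<noteq> 0"
    and r1: "a * c = evalP P b" and r2: "b * d = evalP Q c" and r3: "c * e = evalP P d"
    and cP: "\<And>i. emb (coeff P i) \<in> ring_gen T" and cQ: "\<And>i. emb (coeff Q i) \<in> ring_gen T"
    and "a \<in> ring_gen T" "b \<in> ring_gen T" "c \<in> ring_gen T" "d \<in> ring_gen T"
  shows "e \<in> ring_gen T"
proof -
  define S where "S = (\<Sum>i<degree Q. emb (coeff Q (Suc i)) * c ^ i)"
  define H where "H = (\<Sum>i\<le>degree P. emb (coeff P i) * d ^ (degree P - i) * (\<Sum>j<i. (b * d) ^ j))"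
  have cS: "c * S = b * d - 1"
    using r2 evalP_split_constant[of Q c] Q0 by (simp add: S_def)
  have "c * e = c * (d ^ degree P * a - S * H)"
    using palindromic_exchange_identity[OF pal r1 cS] r3 by (simp add: H_def)
  then have "e = d ^ degree P * a - S * H"
    using \<open>c \<noteq> 0\<close> by simp
  also have "\<dots> \<in> ring_gen T"
    unfolding S_def H_def
    by (intro ring_gen_diff ring_gen.mult ring_gen_power ring_gen_sum assms cP cQ)
  finally show ?thesis .
qed

lemma exchange_sequence_ascending:
  fixes y :: "int \<Rightarrow> 'k::field_char_0 ratfun2"
  assumes rel: "\<And>m. y (m + 1) * y (m - 1) = evalP (Q m) (y m)"
    and per: "\<And>m. Q (m + 2) = Q m" and pal: "\<And>m. palindromic (Q m)"
    and Q0: "\<And>m. coeff (Q m) 0 = 1" and nz: "\<And>m. y m \<noteq> 0"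
    and coeffs: "\<And>m i. emb (coeff (Q m) i) \<in> ring_gen T"
    and init: "\<And>j. k - 1 \<le> j \<Longrightarrow> j \<le> k + 2 \<Longrightarrow> y j \<in> ring_gen T"
  shows "k - 1 \<le> m \<Longrightarrow> y m \<in> ring_gen T"
proof -
  have window: "\<forall>j\<in>{0, 1, 2, 3}. y (k - 1 + int n + j) \<in> ring_gen T" for n
  proof (induct n)
    case 0
    show ?case using init by auto
  next
    case (Suc n)
    define l where "l = k + int n"
    have old: "y (l - 1) \<in> ring_gen T" "y l \<in> ring_gen T" "y (l + 1) \<in> ring_gen T"
      "y (l + 2) \<in> ring_gen T"
      using Suc by (simp_all add: l_def algebra_simps)
    have "y (l + 3) \<in> ring_gen T"
    proof (rule exchange_in_ring_gen[OF pal Q0 nz _ _ _ coeffs coeffs old])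
      show "y (l - 1) * y (l + 1) = evalP (Q l) (y l)"
        using rel[of l] by (simp add: mult.commute)
      show "y l * y (l + 2) = evalP (Q (l + 1)) (y (l + 1))"
        using rel[of "l + 1"] by (simp add: mult.commute add.assoc)
      show "y (l + 1) * y (l + 3) = evalP (Q l) (y (l + 2))"
        using rel[of "l + 2"] per[of l] by (simp add: algebra_simps)
    qed
    then show ?case
      using old by (simp add: l_def algebra_simps)
  qed
  assume "k - 1 \<le> m"
  then show "y m \<in> ring_gen T"
    using window[of "nat (m - k + 1)"] by auto
qed

lemma exchange_sequence_in_ring_gen:
  fixes y :: "int \<Rightarrow> 'k::field_char_0 ratfun2"
  assumes rel: "\<And>m. y (m + 1) * y (m - 1) = evalP (Q m) (y m)"
    and per: "\<And>m. Q (m + 2) = Q m" and pal: "\<And>m. palindromic (Q m)"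
    and Q0: "\<And>m. coeff (Q m) 0 = 1" and nz: "\<And>m. y m \<noteq> 0"
    and coeffs: "\<And>m i. emb (coeff (Q m) i) \<in> ring_gen T"
    and init: "\<And>j. k - 1 \<le> j \<Longrightarrow> j \<le> k + 2 \<Longrightarrow> y j \<in> ring_gen T"
  shows "y m \<in> ring_gen T"
proof (cases "k - 1 \<le> m")
  case True
  then show ?thesis
    using exchange_sequence_ascending[OF assms] by blast
next
  case False
  txt \<open>The reversed sequence \<open>j \<mapsto> y (-j)\<close> satisfies the same hypotheses.\<close>
  have "y (- (- m)) \<in> ring_gen T"
  proof (rule exchange_sequence_ascending[where y = "\<lambda>j. y (- j)" and Q = "\<lambda>j. Q (- j)"
        and k = "- k - 1"])
    show "y (- (j + 1)) * y (- (j - 1)) = evalP (Q (- j)) (y (- j))" for j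
      using rel[of "- j"] by (simp add: mult.commute)
    show "Q (- (j + 2)) = Q (- j)" for j
      using per[of "- j - 2"] by simp
  qed (use assms False in auto)
  then show ?thesis
    by simp
qed

definition span_over :: "'a::comm_ring_1 set \<Rightarrow> ('i \<Rightarrow> 'a) \<Rightarrow> 'a set" where
  "span_over R b = {\<Sum>i\<in>F. c i * b i | F c. finite F \<and> (\<forall>i\<in>F. c i \<in> R)}"

lemma is_basis_over_iff:
  "is_basis_over R M b \<longleftrightarrow>
     (\<forall>F c. finite F \<longrightarrow> (\<forall>i\<in>F. c i \<in> R) \<longrightarrow> (\<Sum>i\<in>F. c i * b i) = 0 \<longrightarrow> (\<forall>i\<in>F. c i = 0))
   \<and> M = span_over R b"
  by (simp add: is_basis_over_def span_over_def)

lemma span_over_sumI: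
  "finite F \<Longrightarrow> (\<And>i. i \<in> F \<Longrightarrow> c i \<in> R) \<Longrightarrow> (\<Sum>i\<in>F. c i * b i) \<in> span_over R b"
  unfolding span_over_def by blast

lemma span_over_sumE:
  assumes "m \<in> span_over R b"
  obtains c F where "m = (\<Sum>i\<in>F. c i * b i)" "finite F" "\<And>i. i \<in> F \<Longrightarrow> c i \<in> R"
  using assms unfolding span_over_def by blast

lemma span_over_0: "0 \<in> span_over R b"
  using span_over_sumI[of "{}"] by simp

lemma span_over_generator: "b i \<in> span_over (ring_gen S) b"
  using span_over_sumI[of "{i}" "\<lambda>_. 1" "ring_gen S" b] by (simp add: ring_gen.one)

lemma span_over_add:
  assumes "m \<in> span_over (ring_gen S) b" "m' \<in> span_over (ring_gen S) b"
  shows "m + m' \<in> span_over (ring_gen S) b"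
proof -
  obtain c F where m: "m = (\<Sum>i\<in>F. c i * b i)" "finite F" "\<And>i. i \<in> F \<Longrightarrow> c i \<in> ring_gen S"
    using assms(1) by (blast elim: span_over_sumE)
  obtain c' F' where m': "m' = (\<Sum>i\<in>F'. c' i * b i)" "finite F'"
    "\<And>i. i \<in> F' \<Longrightarrow> c' i \<in> ring_gen S"
    using assms(2) by (blast elim: span_over_sumE)
  define d where "d i = (if i \<in> F then c i else 0) + (if i \<in> F' then c' i else 0)" for i
  have "m = (\<Sum>i\<in>F \<union> F'. (if i \<in> F then c i else 0) * b i)"
    unfolding m(1) by (rule sum.mono_neutral_cong_left) (use m m' in auto)
  moreover have "m' = (\<Sum>i\<in>F \<union> F'. (if i \<in> F' then c' i else 0) * b i)"
    unfolding m'(1) by (rule sum.mono_neutral_cong_left) (use m m' in auto)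
  ultimately have "m + m' = (\<Sum>i\<in>F \<union> F'. d i * b i)"
    by (simp add: d_def sum.distrib[symmetric] distrib_right)
  also have "\<dots> \<in> span_over (ring_gen S) b"
    using m m' by (intro span_over_sumI) (simp_all add: d_def ring_gen.add ring_gen.zero)
  finally show ?thesis .
qed

lemma span_over_smult:
  assumes "r \<in> ring_gen S" "m \<in> span_over (ring_gen S) b"
  shows "r * m \<in> span_over (ring_gen S) b"
proof -
  obtain c F where m: "m = (\<Sum>i\<in>F. c i * b i)" "finite F" "\<And>i. i \<in> F \<Longrightarrow> c i \<in> ring_gen S"
    using assms(2) by (blast elim: span_over_sumE)
  have "r * m = (\<Sum>i\<in>F. (r * c i) * b i)"
    by (simp add: m(1) sum_distrib_left mult.assoc)
  also have "\<dots> \<in> span_over (ring_gen S) b"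
    using m(2,3) assms(1) by (intro span_over_sumI) (simp_all add: ring_gen.mult)
  finally show ?thesis .
qed

lemma span_over_sum:
  "(\<And>i. i \<in> A \<Longrightarrow> f i \<in> span_over (ring_gen S) b) \<Longrightarrow> sum f A \<in> span_over (ring_gen S) b"
  by (induct A rule: infinite_finite_induct) (simp_all add: span_over_0 span_over_add)

lemma span_over_mult_closed:
  assumes gb: "\<And>i. g * b i \<in> span_over (ring_gen S) b" and "m \<in> span_over (ring_gen S) b"
  shows "g * m \<in> span_over (ring_gen S) b"
proof -
  obtain c F where m: "m = (\<Sum>i\<in>F. c i * b i)" "finite F" "\<And>i. i \<in> F \<Longrightarrow> c i \<in> ring_gen S"
    using assms(2) by (blast elim: span_over_sumE)
  have "g * m = (\<Sum>i\<in>F. c i * (g * b i))"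
    by (simp add: m(1) sum_distrib_left mult_ac)
  also have "\<dots> \<in> span_over (ring_gen S) b"
    using m(3) gb by (simp add: span_over_sum span_over_smult)
  finally show ?thesis .
qed

lemma ring_gen_subset_span_over:
  assumes C: "C \<subseteq> ring_gen S" and one: "1 \<in> span_over (ring_gen S) b"
    and G: "\<And>g i. g \<in> G \<Longrightarrow> g * b i \<in> span_over (ring_gen S) b"
  shows "ring_gen (C \<union> G) \<subseteq> span_over (ring_gen S) b"
proof
  fix y assume "y \<in> ring_gen (C \<union> G)"
  then have "y * m \<in> span_over (ring_gen S) b" if "m \<in> span_over (ring_gen S) b" for m
    using that
  proof (induct arbitrary: m rule: ring_gen.induct)
    case (gen s)
    show ?case
    proof (cases "s \<in> C")
      case True
      then show ?thesis
        using C gen.prems by (intro span_over_smult) auto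
    next
      case False
      with gen have "s \<in> G"
        by blast
      then show ?thesis
        using gen.prems by (rule span_over_mult_closed[OF G])
    qed
  next
    case zero
    then show ?case by (simp add: span_over_0)
  next
    case one
    then show ?case by simp
  next
    case (add a a')
    then show ?case by (simp add: distrib_right span_over_add)
  next
    case (neg a)
    then have "a * m \<in> span_over (ring_gen S) b"
      by blast
    then have "- 1 * (a * m) \<in> span_over (ring_gen S) b"
      by (rule span_over_smult[OF ring_gen.neg[OF ring_gen.one]])
    then show ?case
      by simp
  next
    case (mult a a')
    then show ?case by (simp add: mult.assoc)
  qed
  from this[OF one] show "y \<in> span_over (ring_gen S) b"
    by simp
qed

lemma span_over_subset_ring_gen:
  assumes "S \<subseteq> ring_gen T" "\<And>i. b i \<in> ring_gen T"
  shows "span_over (ring_gen S) b \<subseteq> ring_gen T"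
proof
  fix y assume "y \<in> span_over (ring_gen S) b"
  then obtain c F where y: "y = (\<Sum>i\<in>F. c i * b i)" "\<And>i. i \<in> F \<Longrightarrow> c i \<in> ring_gen S"
    by (blast elim: span_over_sumE)
  show "y \<in> ring_gen T"
    unfolding y(1) using y(2) ring_gen_subset[OF assms(1)] assms(2)
    by (intro ring_gen_sum ring_gen.mult) auto
qed

locale rank2_cluster =
  fixes P1 P2 :: "'k::field_char_0 poly"
  assumes monic1: "lead_coeff P1 = 1" and monic2: "lead_coeff P2 = 1"
    and palindromic1: "palindromic P1" and palindromic2: "palindromic P2"
begin

abbreviation x where "x \<equiv> clx P1 P2"
abbreviation E where "E \<equiv> exch P1 P2"

lemma exch_nonzero: "E m \<noteq> 0"
  using monic1 monic2 by (auto simp: exch_def)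

lemma exch_palindromic: "palindromic (E m)"
  using palindromic1 palindromic2 by (simp add: exch_def)

lemma coeff_0_exch: "coeff (E m) 0 = 1"
  using palindromic_coeff_0[OF palindromic1 monic1] palindromic_coeff_0[OF palindromic2 monic2]
  by (simp add: exch_def)

lemma exch_periodic: "E (m + 2) = E m"
  by (simp add: exch_def)

lemma clpos_Suc_eq:
  "clpos P1 P2 (Suc n) = (snd (clpos P1 P2 n),
     evalP (E (int n + 2)) (snd (clpos P1 P2 n)) / fst (clpos P1 P2 n))"
  by (simp add: case_prod_beta)

lemma clneg_Suc_eq:
  "clneg P1 P2 (Suc n) = (snd (clneg P1 P2 n),
     evalP (E (1 - int n)) (snd (clneg P1 P2 n)) / fst (clneg P1 P2 n))"
  by (simp add: case_prod_beta)

declare clpos.simps(2) [simp del] clneg.simps(2) [simp del]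

lemma fst_clpos: "fst (clpos P1 P2 n) = x (int n + 1)"
  by (simp add: clx_def)

lemma snd_clpos: "snd (clpos P1 P2 n) = x (int n + 2)"
proof -
  have "snd (clpos P1 P2 n) = fst (clpos P1 P2 (Suc n))"
    by (simp only: clpos_Suc_eq fst_conv)
  then show ?thesis
    by (simp add: fst_clpos add.commute)
qed

lemma snd_clneg: "snd (clneg P1 P2 n) = x (1 - int n)"
proof -
  have "nat (1 - (1 - int n)) = n"
    by simp
  then show ?thesis
    by (cases n) (simp_all add: clx_def)
qed

lemma clx_1: "x 1 = var1"
  by (simp add: clx_def)

lemma clx_2: "x 2 = var2"
  using snd_clpos[of 0] by simp

lemma fst_clneg: "fst (clneg P1 P2 n) = x (2 - int n)"
  by (cases n) (simp_all add: clx_2 clneg_Suc_eq snd_clneg)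

lemma clx_forward: "x (int n + 3) = evalP (E (int n + 2)) (x (int n + 2)) / x (int n + 1)"
proof -
  have "x (int n + 3) = snd (clpos P1 P2 (Suc n))"
    by (simp add: snd_clpos add.commute)
  then show ?thesis
    by (simp add: clpos_Suc_eq snd_clpos fst_clpos)
qed

lemma clx_backward: "x (- int n) = evalP (E (1 - int n)) (x (1 - int n)) / x (2 - int n)"
proof -
  have "x (- int n) = snd (clneg P1 P2 (Suc n))"
    by (simp add: snd_clneg)
  then show ?thesis
    by (simp add: clneg_Suc_eq snd_clneg fst_clneg)
qed

lemma alg_indep2_clx_pos: "alg_indep2 (x (int n + 1)) (x (int n + 2))"
proof (induct n)
  case 0
  show ?case using alg_indep2_var1_var2 clx_1 clx_2 by simp
next
  case (Suc n)
  have "alg_indep2 (x (int n + 2)) (x (int n + 3))"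
    by (rule alg_indep2_exchange[OF Suc clx_forward exch_nonzero])
  then show ?case
    by (simp add: add.commute add.left_commute)
qed

lemma alg_indep2_clx_nonpos: "alg_indep2 (x (- int n)) (x (1 - int n))"
proof (induct n)
  case 0
  have "alg_indep2 (x 2) (x 1)"
    using alg_indep2_clx_pos[of 0] alg_indep2_swap by simp
  then have "alg_indep2 (x 1) (x 0)"
    using alg_indep2_exchange[OF _ _ exch_nonzero] clx_backward[of 0] by simp
  then show ?case
    using alg_indep2_swap by simp
next
  case (Suc n)
  have "alg_indep2 (x (1 - int n)) (x (- int n))"
    using Suc alg_indep2_swap by blast
  moreover have "x (- int (Suc n)) = evalP (E (- int n)) (x (- int n)) / x (1 - int n)"
    using clx_backward[of "Suc n"] by (simp add: algebra_simps)
  ultimately have "alg_indep2 (x (- int n)) (x (- int (Suc n)))"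
    using alg_indep2_exchange exch_nonzero by blast
  then show ?case
    using alg_indep2_swap by (simp add: algebra_simps)
qed

lemma alg_indep2_clx: "alg_indep2 (x m) (x (m + 1))"
proof (cases "m \<ge> 1")
  case True
  then show ?thesis
    using alg_indep2_clx_pos[of "nat (m - 1)"] by (simp add: add.commute)
next
  case False
  then show ?thesis
    using alg_indep2_clx_nonpos[of "nat (- m)"] by (simp add: add.commute)
qed

lemma clx_nonzero: "x m \<noteq> 0"
  using alg_indep2_nonzero(1)[OF alg_indep2_clx] .

lemma exchange_relation: "x (m + 1) * x (m - 1) = evalP (E m) (x m)"
proof (cases "m \<ge> 2")
  case True
  then show ?thesis
    using clx_forward[of "nat (m - 2)"] clx_nonzero[of "m - 1"] by (simp add: algebra_simps)
next
  case False
  then show ?thesis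
    using clx_backward[of "nat (1 - m)"] clx_nonzero[of "m + 1"] by (simp add: algebra_simps)
qed

abbreviation exch_coeffs :: "'k ratfun2 set" where
  "exch_coeffs \<equiv> emb ` (set (coeffs P1) \<union> set (coeffs P2))"

lemma coeff_ring_eq: "coeff_ring P1 P2 = ring_gen exch_coeffs"
  by (simp add: coeff_ring_def)

lemma emb_coeff_exch_in_ring_gen:
  assumes "exch_coeffs \<subseteq> T"
  shows "emb (coeff (E m) i) \<in> ring_gen T"
proof (cases "coeff (E m) i = 0")
  case True
  then show ?thesis
    by (simp add: ring_gen.zero)
next
  case False
  then have "coeff (E m) i \<in> set (coeffs (E m))"
    using coeff_in_coeffs exch_nonzero le_degree by blast
  then have "coeff (E m) i \<in> set (coeffs P1) \<union> set (coeffs P2)"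
    by (auto simp: exch_def split: if_splits)
  then show ?thesis
    using assms by (auto intro: ring_gen.gen)
qed

section \<open>Four consecutive cluster variables generate the algebra\<close>

definition window_ring :: "int \<Rightarrow> 'k ratfun2 set" where
  "window_ring k = ring_gen (exch_coeffs \<union> {x (k - 1), x k, x (k + 1), x (k + 2)})"

lemma clx_in_window_ring: "x m \<in> window_ring k"
proof -
  let ?T = "exch_coeffs \<union> {x (k - 1), x k, x (k + 1), x (k + 2)}"
  have coeffs: "emb (coeff (E j) i) \<in> ring_gen ?T" for j i
    by (rule emb_coeff_exch_in_ring_gen) blast
  have init: "x j \<in> ring_gen ?T" if "k - 1 \<le> j" "j \<le> k + 2" for j
  proof -
    have "j \<in> {k - 1, k, k + 1, k + 2}"
      using that by auto
    then show ?thesis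
      by (auto intro: ring_gen.gen)
  qed
  have "x m \<in> ring_gen ?T"
    by (rule exchange_sequence_in_ring_gen[of x E ?T k m, OF exchange_relation exch_periodic
          exch_palindromic coeff_0_exch clx_nonzero coeffs init])
  then show ?thesis
    by (simp add: window_ring_def)
qed

lemma clalg_eq_window_ring: "clalg P1 P2 = window_ring k"
proof
  show "clalg P1 P2 \<subseteq> window_ring k"
    using clx_in_window_ring[of _ k] unfolding clalg_def window_ring_def
    by (intro ring_gen_subset) (auto intro: ring_gen.gen)
  show "window_ring k \<subseteq> clalg P1 P2"
    unfolding clalg_def window_ring_def by (intro ring_gen_mono) auto
qed

section \<open>The standard monomials span the algebra\<close>

abbreviation std_span :: "int \<Rightarrow> 'k ratfun2 set" where
  "std_span k \<equiv> span_over (ring_gen exch_coeffs) (stdmon P1 P2 k)"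

definition window_monomial :: "int \<Rightarrow> nat \<Rightarrow> nat \<Rightarrow> nat \<Rightarrow> nat \<Rightarrow> 'k ratfun2" where
  "window_monomial k p q r s = x (k - 1) ^ p * x k ^ q * x (k + 1) ^ r * x (k + 2) ^ s"

lemma stdmon_eq_window_monomial:
  "stdmon P1 P2 k a = window_monomial k (pos_part (snd a)) (pos_part (- fst a))
     (pos_part (- snd a)) (pos_part (fst a))"
  by (simp add: stdmon_def window_monomial_def case_prod_beta)

lemma window_monomial_eq_stdmon:
  assumes "p = 0 \<or> r = 0" "q = 0 \<or> s = 0"
  shows "window_monomial k p q r s = stdmon P1 P2 k (int s - int q, int p - int r)"
  using assms by (auto simp: window_monomial_def stdmon_def pos_part_def)

text \<open>A monomial containing \<open>x\<^sub>k\<^sub>-\<^sub>1 x\<^sub>k\<^sub>+\<^sub>1\<close> or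
  \<open>x\<^sub>k x\<^sub>k\<^sub>+\<^sub>2\<close> is rewritten by the exchange relation, which lowers the
  total degree in \<open>x\<^sub>k\<^sub>-\<^sub>1\<close> and \<open>x\<^sub>k\<^sub>+\<^sub>2\<close>.\<close>

lemma window_monomial_in_std_span: "window_monomial k p q r s \<in> std_span k"
proof (induct "p + s" arbitrary: p q r s rule: less_induct)
  case less
  have coeff: "emb (coeff (E j) i) \<in> ring_gen exch_coeffs" for j i
    by (rule emb_coeff_exch_in_ring_gen) simp
  consider "p > 0" "r > 0" | "q > 0" "s > 0" | "p = 0 \<or> r = 0" "q = 0 \<or> s = 0"
    by auto
  then show ?case
  proof cases
    case 1
    have "window_monomial k p q r s
        = window_monomial k (p - 1) q (r - 1) s * (x (k + 1) * x (k - 1))"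
      using 1 by (simp add: window_monomial_def power_eq_if mult_ac)
    also have "\<dots> = (\<Sum>i\<le>degree (E k).
        emb (coeff (E k) i) * window_monomial k (p - 1) (q + i) (r - 1) s)"
      unfolding exchange_relation evalP_altdef sum_distrib_left
      by (simp add: window_monomial_def power_add mult_ac)
    also have "\<dots> \<in> std_span k"
      by (rule span_over_sum, rule span_over_smult[OF coeff], rule less) (use 1 in auto)
    finally show ?thesis .
  next
    case 2
    have rel: "x (k + 2) * x k = evalP (E (k + 1)) (x (k + 1))"
      using exchange_relation[of "k + 1"] by (simp add: add.assoc)
    have "window_monomial k p q r s
        = window_monomial k p (q - 1) r (s - 1) * (x (k + 2) * x k)"
      using 2 by (simp add: window_monomial_def power_eq_if mult_ac)
    also have "\<dots> = (\<Sum>i\<le>degree (E (k + 1)).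
        emb (coeff (E (k + 1)) i) * window_monomial k p (q - 1) (r + i) (s - 1))"
      unfolding rel evalP_altdef sum_distrib_left
      by (simp add: window_monomial_def power_add mult_ac)
    also have "\<dots> \<in> std_span k"
      by (rule span_over_sum, rule span_over_smult[OF coeff], rule less) (use 2 in auto)
    finally show ?thesis .
  next
    case 3
    then show ?thesis
      by (simp add: window_monomial_eq_stdmon span_over_generator)
  qed
qed

lemma clx_window_mult_stdmon:
  assumes "g \<in> {x (k - 1), x k, x (k + 1), x (k + 2)}"
  shows "g * stdmon P1 P2 k a \<in> std_span k"
proof -
  obtain p q r s where "stdmon P1 P2 k a = window_monomial k p q r s"
    using stdmon_eq_window_monomial by blast
  moreover have "g * window_monomial k p q r s \<in> std_span k"
    using assms window_monomial_in_std_span[of k "Suc p" q r s]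
      window_monomial_in_std_span[of k p "Suc q" r s]
      window_monomial_in_std_span[of k p q "Suc r" s]
      window_monomial_in_std_span[of k p q r "Suc s"]
    by (auto simp: window_monomial_def mult_ac)
  ultimately show ?thesis
    by simp
qed

lemma clalg_subset_std_span: "clalg P1 P2 \<subseteq> std_span k"
proof -
  have "1 = stdmon P1 P2 k (0, 0)"
    by (simp add: stdmon_def pos_part_def)
  then have "1 \<in> std_span k"
    using span_over_generator by metis
  then have "window_ring k \<subseteq> std_span k"
    unfolding window_ring_def
    by (intro ring_gen_subset_span_over clx_window_mult_stdmon) (auto intro: ring_gen.gen)
  then show ?thesis
    using clalg_eq_window_ring[of k] by simp
qed

lemma std_span_subset_clalg: "std_span k \<subseteq> clalg P1 P2"
  unfolding clalg_def
proof (rule span_over_subset_ring_gen)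
  show "exch_coeffs \<subseteq> ring_gen (exch_coeffs \<union> range x)"
    by (auto intro: ring_gen.gen)
  show "stdmon P1 P2 k a \<in> ring_gen (exch_coeffs \<union> range x)" for a
    unfolding stdmon_def case_prod_beta
    by (intro ring_gen.mult ring_gen_power ring_gen.gen) auto
qed

section \<open>Linear independence of the standard monomials\<close>

lemma stdmon_mult_power:
  assumes "\<bar>fst a\<bar> \<le> int M" "\<bar>snd a\<bar> \<le> int M"
  shows "stdmon P1 P2 k a * (x k ^ M * x (k + 1) ^ M)
    = x k ^ nat (int M - fst a) * x (k + 1) ^ nat (int M - snd a)
      * evalP (E k) (x k) ^ pos_part (snd a) * evalP (E (k + 1)) (x (k + 1)) ^ pos_part (fst a)"
proof -
  define p where "p = pos_part (snd a)"
  define q where "q = pos_part (- fst a)"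
  define r where "r = pos_part (- snd a)"
  define s where "s = pos_part (fst a)"
  define e1 where "e1 = nat (int M - fst a)"
  define e2 where "e2 = nat (int M - snd a)"
  have n1: "q + M = s + e1"
    using assms by (simp add: q_def s_def e1_def pos_part_def)
  have n2: "r + M = p + e2"
    using assms by (simp add: p_def r_def e2_def pos_part_def)
  have rel1: "x (k - 1) * x (k + 1) = evalP (E k) (x k)"
    using exchange_relation[of k] by (simp add: mult.commute)
  have rel2: "x (k + 2) * x k = evalP (E (k + 1)) (x (k + 1))"
    using exchange_relation[of "k + 1"] by (simp add: add.assoc)
  have "stdmon P1 P2 k a * (x k ^ M * x (k + 1) ^ M)
      = x (k - 1) ^ p * x (k + 2) ^ s * (x k ^ (q + M) * x (k + 1) ^ (r + M))"
    by (simp add: stdmon_def case_prod_beta p_def q_def r_def s_def power_add mult_ac)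
  also have "\<dots> = (x (k - 1) * x (k + 1)) ^ p * (x (k + 2) * x k) ^ s * x k ^ e1 * x (k + 1) ^ e2"
    unfolding n1 n2 by (simp add: power_add power_mult_distrib mult_ac)
  also have "\<dots> = x k ^ e1 * x (k + 1) ^ e2 * evalP (E k) (x k) ^ p
      * evalP (E (k + 1)) (x (k + 1)) ^ s"
    unfolding rel1 rel2 by (simp add: mult_ac)
  finally show ?thesis
    by (simp add: e1_def e2_def p_def s_def)
qed

lemma eval2_cleared_stdmon:
  assumes "\<bar>fst a\<bar> \<le> int M" "\<bar>snd a\<bar> \<le> int M"
  shows "eval2 (poly_tensor (smult t (monom 1 (nat (int M - fst a)) * E k ^ pos_part (snd a)))
                            (monom 1 (nat (int M - snd a)) * E (k + 1) ^ pos_part (fst a)))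
           (x k) (x (k + 1))
         = emb t * stdmon P1 P2 k a * (x k ^ M * x (k + 1) ^ M)"
  using stdmon_mult_power[OF assms]
  by (simp add: eval2_poly_tensor evalP_smult evalP_mult evalP_monom evalP_power mult_ac)

text \<open>After clearing denominators, a relation among standard monomials becomes a polynomial
  relation between the algebraically independent \<open>x\<^sub>k, x\<^sub>k\<^sub>+\<^sub>1\<close>,
  whose terms have pairwise distinct lowest monomials.\<close>

lemma stdmon_linear_independent:
  assumes "finite F" and coeffs: "\<forall>a\<in>F. c a \<in> ring_gen exch_coeffs"
    and sum0: "(\<Sum>a\<in>F. c a * stdmon P1 P2 k a) = 0"
  shows "\<forall>a\<in>F. c a = 0"
proof -
  obtain c' where c': "\<forall>a\<in>F. c a = emb (c' a)"
    using bchoice[of F "\<lambda>a t. c a = emb t"] coeffs ring_gen_emb_image by metis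
  define M where "M = (\<Sum>a\<in>F. nat \<bar>fst a\<bar> + nat \<bar>snd a\<bar>)"
  have bound: "\<bar>fst a\<bar> \<le> int M" "\<bar>snd a\<bar> \<le> int M" if "a \<in> F" for a
  proof -
    have "nat \<bar>fst a\<bar> + nat \<bar>snd a\<bar> \<le> M"
      unfolding M_def using \<open>finite F\<close> that by (intro member_le_sum) auto
    then show "\<bar>fst a\<bar> \<le> int M" "\<bar>snd a\<bar> \<le> int M"
      by linarith+
  qed
  define e where "e a = (nat (int M - fst a), nat (int M - snd a))" for a :: "int \<times> int"
  define G where "G = (\<Sum>a\<in>F. poly_tensor
      (smult (c' a) (monom 1 (fst (e a)) * E k ^ pos_part (snd a)))
      (monom 1 (snd (e a)) * E (k + 1) ^ pos_part (fst a)))"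
  have "eval2 G (x k) (x (k + 1)) = (\<Sum>a\<in>F. c a * stdmon P1 P2 k a) * (x k ^ M * x (k + 1) ^ M)"
    unfolding G_def eval2_sum sum_distrib_right e_def
    using c' by (intro sum.cong) (simp_all add: eval2_cleared_stdmon bound)
  then have "G = 0"
    using sum0 alg_indep2_clx[of k] unfolding alg_indep2_def by simp
  moreover have "inj_on e F"
  proof (rule inj_onI)
    fix a b assume "a \<in> F" "b \<in> F" "e a = e b"
    then show "a = b"
      using bound[of a] bound[of b] by (auto simp: e_def prod_eq_iff eq_nat_nat_iff)
  qed
  ultimately have "\<forall>a\<in>F. c' a = 0"
    using sum_poly_tensor_lowest_term[of F e "\<lambda>a. E k ^ pos_part (snd a)"
        "\<lambda>a. E (k + 1) ^ pos_part (fst a)" c'] \<open>finite F\<close>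
    by (simp add: G_def coeff_0_power coeff_0_exch)
  then show ?thesis
    using c' by simp
qed

end

theorem theorem2p4:
  fixes P1 P2 :: "'k::field_char_0 poly" and k :: int
  assumes "lead_coeff P1 = 1" and "lead_coeff P2 = 1"
    and "palindromic P1" and "palindromic P2"
  shows "is_basis_over (coeff_ring P1 P2) (clalg P1 P2) (stdmon P1 P2 k)"
proof -
  interpret rank2_cluster P1 P2
    using assms by unfold_locales
  have "clalg P1 P2 = std_span k"
    using clalg_subset_std_span std_span_subset_clalg by blast
  then show ?thesis
    unfolding is_basis_over_iff coeff_ring_eq using stdmon_linear_independent by blast
qed

end
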